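(* Let $0\le\lambda\le n$ and $1\le p<\infty$, and let $\phi\in L^1(\mathbb{R}^n)$. If $f\in V_0L^{p,\lambda}$ then $f*\phi\in V_0L^{p,\lambda}$; if $f\in V_\infty L^{p,\lambda}$ then $f*\phi\in V_\infty L^{p,\lambda}$; and if $f\in V^{(\ast)}L^{p,\lambda}$ then $f*\phi\in V^{(\ast)}L^{p,\lambda}$.
   Context: $B(x,r)$ is the open ball in $\mathbb{R}^n$ with center $x$ and radius $r$. For $f\in L^1_{\mathrm{loc}}(\mathbb{R}^n)$ let $\mathfrak{M}_{p,\lambda}(f;x,r):=r^{-\lambda}\int_{B(x,r)}|f(y)|^p\,dy$. The homogeneous Morrey space $L^{p,\lambda}(\mathbb{R}^n)$ consists of $f\in L^p_{\mathrm{loc}}(\mathbb{R}^n)$ with $\|f\|_{p,\lambda}:=\sup_{x\in\mathbb{R}^n,\,r>0}\mathfrak{M}_{p,\lambda}(f;x,r)^{1/p}<\infty$. Subsets of $L^{p,\lambda}(\mathbb{R}^n)$: $V_0L^{p,\lambda}=\{f:\lim_{r\to0}\sup_{x}\mathfrak{M}_{p,\lambda}(f;x,r)=0\}$; $V_\infty L^{p,\lambda}=\{f:\lim_{r\to\infty}\sup_{x}\mathfrak{M}_{p,\lambda}(f;x,r)=0\}$; $V^{(\ast)}L^{p,\lambda}=\{f:\lim_{N\to\infty}\sup_{x\in\mathbb{R}^n}\int_{B(x,1)}|f(y)|^p\chi_{\mathbb{R}^n\setminus B(0,N)}(y)\,dy=0\}$. *)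

theory Defs
  imports "HOL-Analysis.Analysis"
begin

definition morrey_M :: "real \<Rightarrow> real \<Rightarrow> ('a::euclidean_space \<Rightarrow> real) \<Rightarrow> 'a \<Rightarrow> real \<Rightarrow> ennreal" where
  "morrey_M p lam f x r =
     ennreal (r powr (- lam)) * (\<integral>\<^sup>+ y \<in> ball x r. ennreal (\<bar>f y\<bar> powr p) \<partial>lebesgue)"

definition Lp_loc :: "real \<Rightarrow> ('a::euclidean_space \<Rightarrow> real) set" where
  "Lp_loc p = {f. f \<in> borel_measurable lebesgue \<and>
      (\<forall>x r. (\<integral>\<^sup>+ y \<in> ball x r. ennreal (\<bar>f y\<bar> powr p) \<partial>lebesgue) < \<infinity>)}"

text \<open>Homogeneous Morrey space L^{p,lambda}(R^n): the supremum (= p-th power of the norm) is finite.\<close>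
definition morrey_space :: "real \<Rightarrow> real \<Rightarrow> ('a::euclidean_space \<Rightarrow> real) set" where
  "morrey_space p lam = {f. f \<in> Lp_loc p \<and>
      (SUP x. SUP r \<in> {0<..}. morrey_M p lam f x r) < \<infinity>}"

definition V0_morrey :: "real \<Rightarrow> real \<Rightarrow> ('a::euclidean_space \<Rightarrow> real) set" where
  "V0_morrey p lam = {f. f \<in> morrey_space p lam \<and>
      ((\<lambda>r. SUP x. morrey_M p lam f x r) \<longlongrightarrow> 0) (at_right 0)}"

definition Vinf_morrey :: "real \<Rightarrow> real \<Rightarrow> ('a::euclidean_space \<Rightarrow> real) set" where
  "Vinf_morrey p lam = {f. f \<in> morrey_space p lam \<and>
      ((\<lambda>r. SUP x. morrey_M p lam f x r) \<longlongrightarrow> 0) at_top}"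

definition Vstar_morrey :: "real \<Rightarrow> real \<Rightarrow> ('a::euclidean_space \<Rightarrow> real) set" where
  "Vstar_morrey p lam = {f. f \<in> morrey_space p lam \<and>
      ((\<lambda>N::nat. SUP x. \<integral>\<^sup>+ y \<in> ball x 1.
           ennreal (\<bar>f y\<bar> powr p * indicator (- ball 0 (real N)) y) \<partial>lebesgue) \<longlonglongrightarrow> 0)}"

text \<open>Convolution (f * phi)(x) = integral of f(x - y) phi(y) dy (Bochner integral; 0 where not integrable).\<close>
definition conv :: "('a::euclidean_space \<Rightarrow> real) \<Rightarrow> ('a \<Rightarrow> real) \<Rightarrow> 'a \<Rightarrow> real" where
  "conv f phi x = (\<integral> y. f (x - y) * phi y \<partial>lebesgue)"

end

theory Submission
  imports Defs
begin

text \<open>Write \<open>\<Parallel>\<phi>\<Parallel>\<close> for the \<open>L^1\<close> norm of \<open>\<phi>\<close>. Jensen's inequality for the measure \<open>\<bar>\<phi>(y)\<bar> dy\<close> gives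
  \<open>\<bar>(f * \<phi>)(z)\<bar>^p \<le> \<Parallel>\<phi>\<Parallel>^(p-1) \<integral> \<bar>f(z - y)\<bar>^p \<bar>\<phi>(y)\<bar> dy\<close>. Integrating over a ball and using Tonelli
  and translation invariance, \<open>\<integral>_B(x,r) \<bar>f * \<phi>\<bar>^p \<le> \<Parallel>\<phi>\<Parallel>^p sup_x' \<integral>_B(x',r) \<bar>f\<bar>^p\<close>, hence
  \<open>sup_x \<MM>(f * \<phi>; x, r) \<le> \<Parallel>\<phi>\<Parallel>^p sup_x \<MM>(f; x, r)\<close> for every \<open>r\<close>; this carries the vanishing as
  \<open>r \<rightarrow> 0\<close> and as \<open>r \<rightarrow> \<infinity>\<close> over to \<open>f * \<phi>\<close>. For \<open>V^(*)\<close> the \<open>y\<close>-integral is split at \<open>\<bar>y\<bar> = R\<close>: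
  for \<open>\<bar>y\<bar> \<le> R\<close> the translate of the complement of \<open>B(0, N)\<close> lies in the complement of
  \<open>B(0, N - R)\<close>, so this part is controlled by the tail of \<open>f\<close> beyond \<open>N - R\<close>, while the part
  \<open>\<bar>y\<bar> > R\<close> is at most the tail of \<open>\<phi>\<close> times \<open>sup_x \<integral>_B(x,1) \<bar>f\<bar>^p\<close>.

  As \<open>f(z - y)\<close> need not be measurable in \<open>(z, y)\<close> for Lebesgue measurable \<open>f\<close>, the functions
  \<open>f\<close> and \<open>\<phi>\<close> are first replaced by Borel representatives; this changes neither the convolution
  nor membership in the Morrey spaces.\<close>

section \<open>Young and Jensen inequalities\<close>

lemma Youngs_inequality_tangent:
  fixes x c p :: real
  assumes "0 \<le> x" "0 < c" "1 \<le> p"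
  shows "x \<le> x powr p / (p * c powr (p - 1)) + (1 - 1/p) * c"
proof (cases "x = 0")
  case True
  then show ?thesis using assms by (simp add: field_simps)
next
  case False
  with assms have x: "0 < x" by simp
  have "(x powr p / c powr (p - 1)) powr (1/p) = x / c powr ((p - 1) / p)"
    using assms x by (simp add: powr_divide powr_powr)
  moreover have "c powr (1 - 1/p) = c powr ((p - 1) / p)"
    using assms by (simp add: field_simps)
  ultimately have "x = (x powr p / c powr (p - 1)) powr (1/p) * c powr (1 - 1/p)"
    using assms by simp
  also have "\<dots> \<le> 1/p * (x powr p / c powr (p - 1)) + (1 - 1/p) * c"
    using assms x by (intro Youngs_inequality_0) (auto simp: field_simps)
  finally show ?thesis by (simp add: field_simps)
qed

lemma nn_integral_mult_le_Young:
  fixes a w :: "'b \<Rightarrow> real"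
  assumes [measurable]: "a \<in> borel_measurable M" "w \<in> borel_measurable M"
    and a0: "\<And>x. 0 \<le> a x" and w0: "\<And>x. 0 \<le> w x" and c: "0 < c" and p: "1 \<le> p"
  shows "(\<integral>\<^sup>+ x. ennreal (a x * w x) \<partial>M)
    \<le> ennreal (1 / (p * c powr (p - 1))) * (\<integral>\<^sup>+ x. ennreal (a x powr p * w x) \<partial>M)
      + ennreal ((1 - 1/p) * c) * (\<integral>\<^sup>+ x. ennreal (w x) \<partial>M)"
    (is "_ \<le> ?rhs")
proof -
  have "ennreal (a x * w x) \<le> ennreal (1 / (p * c powr (p - 1))) * ennreal (a x powr p * w x)
      + ennreal ((1 - 1/p) * c) * ennreal (w x)" for x
  proof -
    have "a x * w x \<le> (a x powr p / (p * c powr (p - 1)) + (1 - 1/p) * c) * w x"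
      using Youngs_inequality_tangent[OF a0 c p] w0 by (rule mult_right_mono)
    also have "\<dots> = 1 / (p * c powr (p - 1)) * (a x powr p * w x) + (1 - 1/p) * c * w x"
      by (simp add: field_simps)
    finally show ?thesis
      using p c a0 w0
      by (simp add: ennreal_mult'[symmetric] ennreal_plus[symmetric] del: ennreal_plus)
  qed
  then have "(\<integral>\<^sup>+ x. ennreal (a x * w x) \<partial>M) \<le> (\<integral>\<^sup>+ x. ennreal (1 / (p * c powr (p - 1)))
      * ennreal (a x powr p * w x) + ennreal ((1 - 1/p) * c) * ennreal (w x) \<partial>M)"
    by (rule nn_integral_mono)
  also have "\<dots> = ?rhs"
    by (subst nn_integral_add) (auto simp: nn_integral_cmult)
  finally show ?thesis .
qed

lemma nn_integral_mult_le_Hoelder: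
  fixes a w :: "'b \<Rightarrow> real"
  assumes [measurable]: "a \<in> borel_measurable M" "w \<in> borel_measurable M"
    and a0: "\<And>x. 0 \<le> a x" and w0: "\<And>x. 0 \<le> w x" and p: "1 \<le> p"
    and W: "(\<integral>\<^sup>+ x. ennreal (w x) \<partial>M) = ennreal W" "0 < W"
    and I: "(\<integral>\<^sup>+ x. ennreal (a x powr p * w x) \<partial>M) = ennreal I" "0 < I"
  shows "(\<integral>\<^sup>+ x. ennreal (a x * w x) \<partial>M) \<le> ennreal (I powr (1/p) * W powr (1 - 1/p))"
proof -
  define u v where "u = I powr (1/p)" and "v = W powr (1/p)"
  have uv: "0 < u" "0 < v" "I = u powr p" "W = v powr p"
    using I(2) W(2) p by (auto simp: u_def v_def powr_powr)
  define c where "c = u / v"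
  have "0 < c" using uv by (simp add: c_def)
  have "(\<integral>\<^sup>+ x. ennreal (a x * w x) \<partial>M)
      \<le> ennreal (1 / (p * c powr (p - 1))) * ennreal I + ennreal ((1 - 1/p) * c) * ennreal W"
    using nn_integral_mult_le_Young[OF assms(1-4) \<open>0 < c\<close> p] unfolding W(1) I(1) .
  also have "\<dots> = ennreal (I / (p * c powr (p - 1)) + (1 - 1/p) * c * W)"
    using I(2) W(2) \<open>0 < c\<close> p
    by (simp add: ennreal_mult'[symmetric] ennreal_plus[symmetric] del: ennreal_plus)
  also have "I / (p * c powr (p - 1)) + (1 - 1/p) * c * W = u * v powr (p - 1)"
  proof -
    have "c powr (p - 1) = u powr (p - 1) / v powr (p - 1)"
      using uv by (simp add: c_def powr_divide)
    moreover have "u powr p = u * u powr (p - 1)" "v powr p = v * v powr (p - 1)"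
      using uv by (simp_all add: powr_diff)
    ultimately show ?thesis
      using uv p unfolding c_def by (simp add: field_simps)
  qed
  also have "u * v powr (p - 1) = I powr (1/p) * W powr (1 - 1/p)"
    using W(2) p by (simp add: u_def v_def powr_powr field_simps)
  finally show ?thesis .
qed

lemma nn_integral_Jensen_powr:
  fixes a w :: "'b \<Rightarrow> real"
  assumes [measurable]: "a \<in> borel_measurable M" "w \<in> borel_measurable M"
    and a0: "\<And>x. 0 \<le> a x" and w0: "\<And>x. 0 \<le> w x" and p: "1 \<le> p"
    and W: "(\<integral>\<^sup>+ x. ennreal (w x) \<partial>M) = ennreal W" "0 \<le> W"
    and t: "0 \<le> t" "ennreal t \<le> (\<integral>\<^sup>+ x. ennreal (a x * w x) \<partial>M)"
  shows "ennreal (t powr p) \<le> ennreal (W powr (p - 1)) * (\<integral>\<^sup>+ x. ennreal (a x powr p * w x) \<partial>M)"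
proof -
  define I where "I = (\<integral>\<^sup>+ x. ennreal (a x powr p * w x) \<partial>M)"
  show ?thesis
  proof (cases "W = 0 \<or> I = 0")
    case True
    have "AE x in M. a x * w x = 0"
      using True
    proof
      assume "W = 0"
      then have "AE x in M. ennreal (w x) = 0"
        using W nn_integral_0_iff_AE[of "\<lambda>x. ennreal (w x)" M] by simp
      then show ?thesis using w0 by (auto elim!: eventually_mono)
    next
      assume "I = 0"
      then have "AE x in M. ennreal (a x powr p * w x) = 0"
        using nn_integral_0_iff_AE[of "\<lambda>x. ennreal (a x powr p * w x)" M] by (simp add: I_def)
      then have "AE x in M. a x powr p * w x = 0"
        using a0 w0 by (auto elim!: eventually_mono)
      then show ?thesis by (auto elim!: eventually_mono)
    qed
    then have "(\<integral>\<^sup>+ x. ennreal (a x * w x) \<partial>M) = 0"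
      by (subst nn_integral_cong_AE[where v="\<lambda>_. 0"]) (auto elim!: eventually_mono)
    with t have "t = 0" by simp
    then show ?thesis using p by simp
  next
    case False
    show ?thesis
    proof (cases I)
      case (real Ir)
      with False W have pos: "0 < W" "0 < Ir" by auto
      have "t \<le> Ir powr (1/p) * W powr (1 - 1/p)"
        using order_trans[OF t(2) nn_integral_mult_le_Hoelder[OF assms(1-5) W(1) pos(1) _ pos(2)]]
          real pos by (simp add: I_def)
      then have "t powr p \<le> (Ir powr (1/p) * W powr (1 - 1/p)) powr p"
        using t p by (intro powr_mono2) auto
      also have "\<dots> = W powr (p - 1) * Ir"
      proof -
        have "(1 - 1/p) * p = p - 1" using p by (simp add: field_simps)
        then show ?thesis using pos p by (simp add: powr_mult powr_powr)
      qed
      finally show ?thesis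
        using real pos by (simp add: I_def[symmetric] ennreal_mult'[symmetric])
    next
      case top
      then show ?thesis using False W by (simp add: I_def[symmetric] ennreal_mult_top)
    qed
  qed
qed


section \<open>Borel representatives\<close>

lemma lborel_distr_reflect: "distr lborel borel (\<lambda>y. z - y) = (lborel :: 'a::euclidean_space measure)"
proof -
  have "(lborel :: 'a measure) = density (distr lborel borel (\<lambda>x. z + (-1) *\<^sub>R x)) (\<lambda>_. \<bar>-1::real\<bar> ^ DIM('a))"
    by (rule lborel_affine) simp
  then show ?thesis by (simp add: density_1)
qed

lemma AE_lborel_reflect:
  fixes z :: "'a::euclidean_space"
  assumes "AE x in lborel. P x"
  shows "AE y in lborel. P (z - y)"
proof -
  have "AE x in distr lborel borel (\<lambda>y. z - y). P x"
    unfolding lborel_distr_reflect by (rule assms)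
  then show ?thesis by (rule AE_distrD[rotated]) measurable
qed

lemma borel_measurable_lebesgue_reflect:
  fixes f :: "'a::euclidean_space \<Rightarrow> real"
  assumes "f \<in> borel_measurable lebesgue"
  shows "(\<lambda>y. f (z - y)) \<in> borel_measurable lebesgue"
proof -
  have reflect: "(\<lambda>x. z + (\<Sum>j\<in>Basis. (-1 * (x \<bullet> j)) *\<^sub>R j)) = (\<lambda>x. z - x)"
  proof
    fix x :: 'a
    have "(\<Sum>j\<in>Basis. (-1 * (x \<bullet> j)) *\<^sub>R j) = - (\<Sum>j\<in>Basis. (x \<bullet> j) *\<^sub>R j)"
      by (simp add: sum_negf[symmetric])
    then show "z + (\<Sum>j\<in>Basis. (-1 * (x \<bullet> j)) *\<^sub>R j) = z - x"
      by (simp add: euclidean_representation)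
  qed
  have "(\<lambda>x. z - x) \<in> lebesgue \<rightarrow>\<^sub>M lebesgue"
    using lebesgue_affine_measurable[of "\<lambda>_. -1" z] unfolding reflect by simp
  from measurable_comp[OF this assms] show ?thesis by (simp add: comp_def)
qed

lemma conv_cong_AE:
  fixes f g phi psi :: "'a::euclidean_space \<Rightarrow> real"
  assumes [measurable]: "f \<in> borel_measurable lebesgue" "g \<in> borel_measurable lebesgue"
      "phi \<in> borel_measurable lebesgue" "psi \<in> borel_measurable lebesgue"
    and fg: "AE x in lborel. f x = g x" and phi_psi: "AE x in lborel. phi x = psi x"
  shows "conv f phi = conv g psi"
proof
  fix z
  have "AE y in lborel. f (z - y) * phi y = g (z - y) * psi y"
    using AE_lborel_reflect[OF fg, of z] phi_psi by eventually_elim simp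
  moreover have "(\<lambda>y. f (z - y)) \<in> borel_measurable lebesgue" "(\<lambda>y. g (z - y)) \<in> borel_measurable lebesgue"
    by (simp_all add: borel_measurable_lebesgue_reflect)
  ultimately show "conv f phi z = conv g psi z"
    unfolding conv_def by (intro integral_cong_AE) (auto simp: AE_completion_iff)
qed

lemma conv_borel_eq_lborel:
  fixes g psi :: "'a::euclidean_space \<Rightarrow> real"
  assumes [measurable]: "g \<in> borel_measurable borel" "psi \<in> borel_measurable borel"
  shows "conv g psi = (\<lambda>z. \<integral> y. g (z - y) * psi y \<partial>lborel)"
  unfolding conv_def by (intro ext integral_completion) measurable

lemma borel_measurable_conv:
  fixes g psi :: "'a::euclidean_space \<Rightarrow> real"
  assumes [measurable]: "g \<in> borel_measurable borel" "psi \<in> borel_measurable borel"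
  shows "conv g psi \<in> borel_measurable borel"
  unfolding conv_borel_eq_lborel[OF assms] by measurable

lemma conv_Borel_representatives:
  fixes f phi :: "'a::euclidean_space \<Rightarrow> real"
  assumes f: "f \<in> borel_measurable lebesgue" and phi: "integrable lebesgue phi"
  obtains g psi where "g \<in> borel_measurable borel" "psi \<in> borel_measurable borel"
    "AE x in lborel. f x = g x" "integrable lborel psi" "conv f phi = conv g psi"
proof -
  have phi_meas: "phi \<in> borel_measurable lebesgue" using phi by blast
  obtain g psi where g: "g \<in> borel_measurable borel" "AE x in lborel. f x = g x"
    and psi: "psi \<in> borel_measurable borel" "AE x in lborel. phi x = psi x"
    using completion_ex_borel_measurable_real[OF f] completion_ex_borel_measurable_real[OF phi_meas]
    by auto
  have g_psi: "g \<in> borel_measurable lebesgue" "psi \<in> borel_measurable lebesgue"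
    using g(1) psi(1) by (simp_all add: measurable_completion)
  have "integrable lebesgue psi"
    using integrable_cong_AE[OF phi_meas g_psi(2)] psi(2) phi by (simp add: AE_completion_iff)
  then have "integrable lborel psi"
    using psi(1) by (simp add: integrable_completion)
  moreover have "conv f phi = conv g psi"
    using f g_psi(1) phi_meas g_psi(2) g(2) psi(2) by (rule conv_cong_AE)
  ultimately show ?thesis using that g(1,2) psi(1) by blast
qed

section \<open>Morrey spaces\<close>

abbreviation morrey_sup :: "real \<Rightarrow> real \<Rightarrow> ('a::euclidean_space \<Rightarrow> real) \<Rightarrow> real \<Rightarrow> ennreal" where
  "morrey_sup p lam f r \<equiv> SUP x. morrey_M p lam f x r"

abbreviation morrey_norm_pow :: "real \<Rightarrow> real \<Rightarrow> ('a::euclidean_space \<Rightarrow> real) \<Rightarrow> ennreal" where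
  "morrey_norm_pow p lam f \<equiv> SUP x. SUP r \<in> {0<..}. morrey_M p lam f x r"

abbreviation morrey_tail :: "real \<Rightarrow> ('a::euclidean_space \<Rightarrow> real) \<Rightarrow> nat \<Rightarrow> ennreal" where
  "morrey_tail p f N \<equiv> SUP x. \<integral>\<^sup>+ y \<in> ball x 1. ennreal (\<bar>f y\<bar> powr p * indicator (- ball 0 (real N)) y) \<partial>lebesgue"

lemma morrey_sup_le_morrey_norm_pow: "0 < r \<Longrightarrow> morrey_sup p lam f r \<le> morrey_norm_pow p lam f"
  by (auto intro!: SUP_mono SUP_upper2)

lemma set_nn_integral_ball_eq_morrey_M:
  assumes "0 < r"
  shows "(\<integral>\<^sup>+ y \<in> ball x r. ennreal (\<bar>f y\<bar> powr p) \<partial>lebesgue) = ennreal (r powr lam) * morrey_M p lam f x r"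
  using assms by (simp add: morrey_M_def mult.assoc[symmetric] ennreal_mult'[symmetric] powr_minus)

lemma morrey_space_iff:
  "f \<in> morrey_space p lam \<longleftrightarrow> f \<in> borel_measurable lebesgue \<and> morrey_norm_pow p lam f < \<infinity>"
proof -
  have "(\<integral>\<^sup>+ y \<in> ball x r. ennreal (\<bar>f y\<bar> powr p) \<partial>lebesgue) < \<infinity>"
    if norm: "morrey_norm_pow p lam f < \<infinity>" for x r
  proof (cases "0 < r")
    case True
    have "(\<integral>\<^sup>+ y \<in> ball x r. ennreal (\<bar>f y\<bar> powr p) \<partial>lebesgue) = ennreal (r powr lam) * morrey_M p lam f x r"
      by (rule set_nn_integral_ball_eq_morrey_M[OF True])
    also have "\<dots> \<le> ennreal (r powr lam) * morrey_norm_pow p lam f"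
      using True by (intro mult_left_mono SUP_upper2) auto
    also have "\<dots> < \<infinity>"
      using norm by (simp add: ennreal_mult_less_top)
    finally show ?thesis .
  next
    case False
    then show ?thesis by (simp add: ball_empty)
  qed
  then show ?thesis by (auto simp: morrey_space_def Lp_loc_def)
qed

lemma morrey_spaces_cong_AE:
  fixes f g :: "'a::euclidean_space \<Rightarrow> real"
  assumes "f \<in> borel_measurable lebesgue" "g \<in> borel_measurable lebesgue"
    and fg: "AE x in lborel. f x = g x"
  shows "f \<in> V0_morrey p lam \<longleftrightarrow> g \<in> V0_morrey p lam"
    and "f \<in> Vinf_morrey p lam \<longleftrightarrow> g \<in> Vinf_morrey p lam"
    and "f \<in> Vstar_morrey p lam \<longleftrightarrow> g \<in> Vstar_morrey p lam"
proof -
  have "morrey_M p lam f = morrey_M p lam g"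
    unfolding morrey_M_def using fg
    by (intro ext arg_cong2[where f="(*)"] refl nn_integral_cong_AE)
       (auto simp: AE_completion_iff elim!: eventually_mono)
  moreover have "morrey_tail p f = morrey_tail p g"
    using fg by (intro ext SUP_cong refl nn_integral_cong_AE)
      (auto simp: AE_completion_iff elim!: eventually_mono)
  ultimately show "f \<in> V0_morrey p lam \<longleftrightarrow> g \<in> V0_morrey p lam"
    and "f \<in> Vinf_morrey p lam \<longleftrightarrow> g \<in> Vinf_morrey p lam"
    and "f \<in> Vstar_morrey p lam \<longleftrightarrow> g \<in> Vstar_morrey p lam"
    using assms unfolding V0_morrey_def Vinf_morrey_def Vstar_morrey_def morrey_space_iff
    by (simp_all only: mem_Collect_eq)
qed

section \<open>Convolution estimates\<close>

lemma sets_borel_ball_cball [measurable]: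
  "ball x r \<in> sets borel" "cball x r \<in> sets borel"
  by auto

lemma nn_integral_lborel_translate:
  fixes G :: "'a::euclidean_space \<Rightarrow> ennreal"
  assumes [measurable]: "G \<in> borel_measurable borel"
  shows "(\<integral>\<^sup>+ z. G z \<partial>lborel) = (\<integral>\<^sup>+ w. G (w + c) \<partial>lborel)"
proof -
  have "(\<integral>\<^sup>+ z. G z \<partial>lborel) = (\<integral>\<^sup>+ z. G z \<partial>distr lborel borel ((+) c))"
    by (simp add: lborel_distr_plus)
  also have "\<dots> = (\<integral>\<^sup>+ w. G (c + w) \<partial>lborel)"
    by (subst nn_integral_distr) auto
  finally show ?thesis by (simp add: add.commute)
qed

text \<open>Jensen's inequality for the measure \<open>\<bar>psi y\<bar> dy\<close> followed by Tonelli.\<close>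
lemma nn_integral_conv_powr_le:
  fixes g psi :: "'a::euclidean_space \<Rightarrow> real" and chi :: "'a \<Rightarrow> ennreal"
  assumes [measurable]: "g \<in> borel_measurable borel" "psi \<in> borel_measurable borel"
      "chi \<in> borel_measurable borel"
    and psi: "integrable lborel psi" and p: "1 \<le> p"
  shows "(\<integral>\<^sup>+ z. ennreal (\<bar>conv g psi z\<bar> powr p) * chi z \<partial>lborel)
     \<le> ennreal ((\<integral> y. \<bar>psi y\<bar> \<partial>lborel) powr (p - 1))
       * (\<integral>\<^sup>+ y. ennreal \<bar>psi y\<bar> * (\<integral>\<^sup>+ z. ennreal (\<bar>g (z - y)\<bar> powr p) * chi z \<partial>lborel) \<partial>lborel)"
proof -
  define C where "C = ennreal ((\<integral> y. \<bar>psi y\<bar> \<partial>lborel) powr (p - 1))"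
  have L1: "(\<integral>\<^sup>+ y. ennreal \<bar>psi y\<bar> \<partial>lborel) = ennreal (\<integral> y. \<bar>psi y\<bar> \<partial>lborel)"
    using psi by (intro nn_integral_eq_integral) auto
  have "ennreal (\<bar>conv g psi z\<bar> powr p) \<le> C * (\<integral>\<^sup>+ y. ennreal (\<bar>g (z - y)\<bar> powr p * \<bar>psi y\<bar>) \<partial>lborel)" for z
    unfolding C_def conv_borel_eq_lborel[OF assms(1,2)]
  proof (rule nn_integral_Jensen_powr[where a="\<lambda>y. \<bar>g (z - y)\<bar>" and w="\<lambda>y. \<bar>psi y\<bar>"])
    show "ennreal \<bar>\<integral> y. g (z - y) * psi y \<partial>lborel\<bar> \<le> (\<integral>\<^sup>+ y. ennreal (\<bar>g (z - y)\<bar> * \<bar>psi y\<bar>) \<partial>lborel)"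
    proof (cases "integrable lborel (\<lambda>y. g (z - y) * psi y)")
      case True
      from integral_norm_bound_ennreal[OF True] show ?thesis by (simp add: abs_mult)
    qed (simp add: not_integrable_integral_eq)
  qed (use L1 p in auto)
  then have "(\<integral>\<^sup>+ z. ennreal (\<bar>conv g psi z\<bar> powr p) * chi z \<partial>lborel)
     \<le> (\<integral>\<^sup>+ z. C * ((\<integral>\<^sup>+ y. ennreal (\<bar>g (z - y)\<bar> powr p * \<bar>psi y\<bar>) \<partial>lborel) * chi z) \<partial>lborel)"
    by (intro nn_integral_mono) (simp add: mult.assoc[symmetric] mult_right_mono)
  also have "\<dots> = C * (\<integral>\<^sup>+ z. (\<integral>\<^sup>+ y. ennreal (\<bar>g (z - y)\<bar> powr p * \<bar>psi y\<bar>) * chi z \<partial>lborel) \<partial>lborel)"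
    by (subst nn_integral_cmult) (auto simp: nn_integral_multc)
  also have "(\<integral>\<^sup>+ z. (\<integral>\<^sup>+ y. ennreal (\<bar>g (z - y)\<bar> powr p * \<bar>psi y\<bar>) * chi z \<partial>lborel) \<partial>lborel)
      = (\<integral>\<^sup>+ y. (\<integral>\<^sup>+ z. ennreal (\<bar>g (z - y)\<bar> powr p * \<bar>psi y\<bar>) * chi z \<partial>lborel) \<partial>lborel)"
    by (rule lborel_pair.Fubini') measurable
  also have "\<dots> = (\<integral>\<^sup>+ y. ennreal \<bar>psi y\<bar> * (\<integral>\<^sup>+ z. ennreal (\<bar>g (z - y)\<bar> powr p) * chi z \<partial>lborel) \<partial>lborel)"
    by (intro nn_integral_cong, subst nn_integral_cmult[symmetric])
       (auto simp: ennreal_mult' mult_ac intro!: nn_integral_cong)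
  finally show ?thesis unfolding C_def .
qed

lemma set_nn_integral_ball_conv_le:
  fixes g psi :: "'a::euclidean_space \<Rightarrow> real"
  assumes [measurable]: "g \<in> borel_measurable borel" "psi \<in> borel_measurable borel"
    and psi: "integrable lborel psi" and p: "1 \<le> p"
  shows "(\<integral>\<^sup>+ z \<in> ball x r. ennreal (\<bar>conv g psi z\<bar> powr p) \<partial>lborel)
     \<le> ennreal ((\<integral> y. \<bar>psi y\<bar> \<partial>lborel) powr p) * (SUP x'. \<integral>\<^sup>+ w \<in> ball x' r. ennreal (\<bar>g w\<bar> powr p) \<partial>lborel)"
proof -
  define Phi where "Phi = (\<integral> y. \<bar>psi y\<bar> \<partial>lborel)"
  define S where "S = (SUP x'. \<integral>\<^sup>+ w \<in> ball x' r. ennreal (\<bar>g w\<bar> powr p) \<partial>lborel)"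
  have translate: "(\<integral>\<^sup>+ z. ennreal (\<bar>g (z - y)\<bar> powr p) * indicator (ball x r) z \<partial>lborel) \<le> S" for y
  proof -
    have "(\<integral>\<^sup>+ z. ennreal (\<bar>g (z - y)\<bar> powr p) * indicator (ball x r) z \<partial>lborel)
        = (\<integral>\<^sup>+ w. ennreal (\<bar>g (w + y - y)\<bar> powr p) * indicator (ball x r) (w + y) \<partial>lborel)"
      by (rule nn_integral_lborel_translate) measurable
    also have "\<dots> = (\<integral>\<^sup>+ w \<in> ball (x - y) r. ennreal (\<bar>g w\<bar> powr p) \<partial>lborel)"
      by (intro nn_integral_cong) (auto simp: indicator_def dist_norm algebra_simps)
    also have "\<dots> \<le> S" unfolding S_def by (rule SUP_upper) simp
    finally show ?thesis .
  qed
  have "(\<integral>\<^sup>+ z \<in> ball x r. ennreal (\<bar>conv g psi z\<bar> powr p) \<partial>lborel)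
     \<le> ennreal (Phi powr (p - 1)) * (\<integral>\<^sup>+ y. ennreal \<bar>psi y\<bar>
         * (\<integral>\<^sup>+ z. ennreal (\<bar>g (z - y)\<bar> powr p) * indicator (ball x r) z \<partial>lborel) \<partial>lborel)"
    unfolding Phi_def by (rule nn_integral_conv_powr_le) (use psi p in auto)
  also have "\<dots> \<le> ennreal (Phi powr (p - 1)) * (\<integral>\<^sup>+ y. ennreal \<bar>psi y\<bar> * S \<partial>lborel)"
    by (intro mult_left_mono nn_integral_mono translate) auto
  also have "\<dots> = ennreal (Phi powr (p - 1) * Phi) * S"
    using psi by (simp add: nn_integral_multc nn_integral_eq_integral Phi_def ennreal_mult' mult.assoc)
  also have "Phi powr (p - 1) * Phi = Phi powr p"
    by (cases "Phi = 0") (simp_all add: Phi_def powr_diff)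
  finally show ?thesis unfolding Phi_def S_def .
qed

lemma morrey_sup_conv_le:
  fixes g psi :: "'a::euclidean_space \<Rightarrow> real"
  assumes [measurable]: "g \<in> borel_measurable borel" "psi \<in> borel_measurable borel"
    and psi: "integrable lborel psi" and p: "1 \<le> p"
  shows "morrey_sup p lam (conv g psi) r \<le> ennreal ((\<integral> y. \<bar>psi y\<bar> \<partial>lborel) powr p) * morrey_sup p lam g r"
proof (rule SUP_least)
  fix x
  have "morrey_M p lam (conv g psi) x r \<le> ennreal (r powr - lam)
      * (ennreal ((\<integral> y. \<bar>psi y\<bar> \<partial>lborel) powr p) * (SUP x'. \<integral>\<^sup>+ w \<in> ball x' r. ennreal (\<bar>g w\<bar> powr p) \<partial>lborel))"
    unfolding morrey_M_def nn_integral_completion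
    by (intro mult_left_mono set_nn_integral_ball_conv_le) (use psi p in auto)
  then show "morrey_M p lam (conv g psi) x r \<le> ennreal ((\<integral> y. \<bar>psi y\<bar> \<partial>lborel) powr p) * morrey_sup p lam g r"
    by (simp add: morrey_M_def nn_integral_completion SUP_mult_left_ennreal mult_ac)
qed

lemma conv_in_morrey_space:
  fixes g psi :: "'a::euclidean_space \<Rightarrow> real"
  assumes [measurable]: "g \<in> borel_measurable borel" "psi \<in> borel_measurable borel"
    and psi: "integrable lborel psi" and p: "1 \<le> p" and g: "g \<in> morrey_space p lam"
  shows "conv g psi \<in> morrey_space p lam"
proof -
  define K where "K = ennreal ((\<integral> y. \<bar>psi y\<bar> \<partial>lborel) powr p)"
  have "morrey_norm_pow p lam (conv g psi) \<le> K * morrey_norm_pow p lam g"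
  proof (intro SUP_least)
    fix x and r :: real
    assume "r \<in> {0<..}"
    have "morrey_M p lam (conv g psi) x r \<le> K * morrey_sup p lam g r"
      unfolding K_def by (rule order_trans[OF SUP_upper morrey_sup_conv_le]) (use psi p in auto)
    also have "\<dots> \<le> K * morrey_norm_pow p lam g"
      using \<open>r \<in> {0<..}\<close> by (intro mult_left_mono morrey_sup_le_morrey_norm_pow) auto
    finally show "morrey_M p lam (conv g psi) x r \<le> K * morrey_norm_pow p lam g" .
  qed
  also have "\<dots> < \<infinity>"
    using g by (simp add: K_def morrey_space_iff ennreal_mult_less_top)
  finally show ?thesis
    unfolding morrey_space_iff using borel_measurable_conv[OF assms(1,2)]
    by (auto intro: measurable_completion)
qed

lemma conv_morrey_sup_tendsto_0:
  fixes g psi :: "'a::euclidean_space \<Rightarrow> real"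
  assumes [measurable]: "g \<in> borel_measurable borel" "psi \<in> borel_measurable borel"
    and psi: "integrable lborel psi" and p: "1 \<le> p"
    and lim: "((\<lambda>r. morrey_sup p lam g r) \<longlongrightarrow> 0) F"
  shows "((\<lambda>r. morrey_sup p lam (conv g psi) r) \<longlongrightarrow> 0) F"
proof -
  define K where "K = ennreal ((\<integral> y. \<bar>psi y\<bar> \<partial>lborel) powr p)"
  have bound: "morrey_sup p lam (conv g psi) r \<le> K * morrey_sup p lam g r" for r
    unfolding K_def by (rule morrey_sup_conv_le) (use psi p in auto)
  have "((\<lambda>r. K * morrey_sup p lam g r) \<longlongrightarrow> K * 0) F"
    by (rule ennreal_tendsto_cmult[OF _ lim]) (simp add: K_def)
  then have K_lim: "((\<lambda>r. K * morrey_sup p lam g r) \<longlongrightarrow> 0) F" by simp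
  show ?thesis
  proof (rule tendsto_sandwich[OF _ _ tendsto_const K_lim])
    show "\<forall>\<^sub>F r in F. 0 \<le> morrey_sup p lam (conv g psi) r" by simp
    show "\<forall>\<^sub>F r in F. morrey_sup p lam (conv g psi) r \<le> K * morrey_sup p lam g r"
      by (simp add: bound)
  qed
qed

lemma conv_in_V0_morrey:
  fixes g psi :: "'a::euclidean_space \<Rightarrow> real"
  assumes "g \<in> borel_measurable borel" "psi \<in> borel_measurable borel"
    and "integrable lborel psi" "1 \<le> p" "g \<in> V0_morrey p lam"
  shows "conv g psi \<in> V0_morrey p lam"
  using assms(5) conv_in_morrey_space[OF assms(1-4)] conv_morrey_sup_tendsto_0[OF assms(1-4)]
  unfolding V0_morrey_def by blast

lemma conv_in_Vinf_morrey:
  fixes g psi :: "'a::euclidean_space \<Rightarrow> real"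
  assumes "g \<in> borel_measurable borel" "psi \<in> borel_measurable borel"
    and "integrable lborel psi" "1 \<le> p" "g \<in> Vinf_morrey p lam"
  shows "conv g psi \<in> Vinf_morrey p lam"
  using assms(5) conv_in_morrey_space[OF assms(1-4)] conv_morrey_sup_tendsto_0[OF assms(1-4)]
  unfolding Vinf_morrey_def by blast

section \<open>The tail condition\<close>

lemma nn_integral_translate_tail_le:
  fixes g :: "'a::euclidean_space \<Rightarrow> real" and N R :: nat
  assumes [measurable]: "g \<in> borel_measurable borel" and RN: "R \<le> N"
  shows "(\<integral>\<^sup>+ z. ennreal (\<bar>g (z - y)\<bar> powr p) * (indicator (- ball 0 (real N)) z * indicator (ball x 1) z) \<partial>lborel)
     \<le> morrey_tail p g (N - R)
       + indicator (- cball 0 (real R)) y * (SUP x'. \<integral>\<^sup>+ w \<in> ball x' 1. ennreal (\<bar>g w\<bar> powr p) \<partial>lborel)"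
    (is "?I \<le> _ + _ * ?S")
proof -
  have "?I = (\<integral>\<^sup>+ w \<in> ball (x - y) 1. ennreal (\<bar>g w\<bar> powr p) * indicator (- ball 0 (real N)) (w + y) \<partial>lborel)"
    by (subst nn_integral_lborel_translate[where c=y]) (auto intro!: nn_integral_cong
        simp: indicator_def dist_norm algebra_simps)
  also have "\<dots> \<le> morrey_tail p g (N - R) + indicator (- cball 0 (real R)) y * ?S"
  proof (cases "y \<in> cball 0 (real R)")
    case True
    have "indicator (- ball 0 (real N)) (w + y) \<le> (indicator (- ball 0 (real (N - R))) w :: ennreal)" for w
    proof (cases "w + y \<in> ball 0 (real N)")
      case False
      have "real N \<le> norm (w + y)" using False by simp
      also have "\<dots> \<le> norm w + norm y" by (rule norm_triangle_ineq)
      finally have "real (N - R) \<le> norm w"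
        using True RN by (simp add: of_nat_diff)
      then show ?thesis by (simp add: indicator_def)
    qed (simp add: indicator_def)
    then have "(\<integral>\<^sup>+ w \<in> ball (x - y) 1. ennreal (\<bar>g w\<bar> powr p) * indicator (- ball 0 (real N)) (w + y) \<partial>lborel)
        \<le> (\<integral>\<^sup>+ w \<in> ball (x - y) 1. ennreal (\<bar>g w\<bar> powr p * indicator (- ball 0 (real (N - R))) w) \<partial>lborel)"
      by (intro nn_integral_mono mult_right_mono) (auto simp: ennreal_mult' ennreal_indicator intro: mult_left_mono)
    also have "\<dots> \<le> morrey_tail p g (N - R)"
      by (rule SUP_upper2[of "x - y"]) (simp_all add: nn_integral_completion)
    finally show ?thesis by (simp add: add_increasing2)
  next
    case False
    have "(\<integral>\<^sup>+ w \<in> ball (x - y) 1. ennreal (\<bar>g w\<bar> powr p) * indicator (- ball 0 (real N)) (w + y) \<partial>lborel)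
        \<le> (\<integral>\<^sup>+ w \<in> ball (x - y) 1. ennreal (\<bar>g w\<bar> powr p) \<partial>lborel)"
      by (intro nn_integral_mono) (auto simp: indicator_def)
    also have "\<dots> \<le> ?S" by (rule SUP_upper) simp
    finally show ?thesis using False by (simp add: add_increasing)
  qed
  finally show ?thesis .
qed

lemma morrey_tail_conv_le:
  fixes g psi :: "'a::euclidean_space \<Rightarrow> real" and N R :: nat
  assumes [measurable]: "g \<in> borel_measurable borel" "psi \<in> borel_measurable borel"
    and psi: "integrable lborel psi" and p: "1 \<le> p" and RN: "R \<le> N"
  shows "morrey_tail p (conv g psi) N \<le> ennreal ((\<integral> y. \<bar>psi y\<bar> \<partial>lborel) powr (p - 1))
      * (ennreal (\<integral> y. \<bar>psi y\<bar> \<partial>lborel) * morrey_tail p g (N - R)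
         + (\<integral>\<^sup>+ y. ennreal \<bar>psi y\<bar> * indicator (- cball 0 (real R)) y \<partial>lborel)
           * (SUP x. \<integral>\<^sup>+ w \<in> ball x 1. ennreal (\<bar>g w\<bar> powr p) \<partial>lborel))"
    (is "_ \<le> ?C * (?P * ?T + ?E * ?S)")
proof (rule SUP_least)
  fix x
  define chi :: "'a \<Rightarrow> ennreal" where "chi z = indicator (- ball 0 (real N)) z * indicator (ball x 1) z" for z
  have L1: "(\<integral>\<^sup>+ y. ennreal \<bar>psi y\<bar> \<partial>lborel) = ?P"
    using psi by (intro nn_integral_eq_integral) auto
  have "(\<integral>\<^sup>+ z \<in> ball x 1. ennreal (\<bar>conv g psi z\<bar> powr p * indicator (- ball 0 (real N)) z) \<partial>lebesgue)
      = (\<integral>\<^sup>+ z. ennreal (\<bar>conv g psi z\<bar> powr p) * chi z \<partial>lborel)"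
    by (auto simp: nn_integral_completion chi_def indicator_def intro!: nn_integral_cong)
  also have "\<dots> \<le> ?C * (\<integral>\<^sup>+ y. ennreal \<bar>psi y\<bar> * (\<integral>\<^sup>+ z. ennreal (\<bar>g (z - y)\<bar> powr p) * chi z \<partial>lborel) \<partial>lborel)"
    by (rule nn_integral_conv_powr_le) (use psi p in \<open>auto simp: chi_def\<close>)
  also have "\<dots> \<le> ?C * (\<integral>\<^sup>+ y. ennreal \<bar>psi y\<bar> * ?T + (ennreal \<bar>psi y\<bar> * indicator (- cball 0 (real R)) y) * ?S \<partial>lborel)"
  proof (intro mult_left_mono nn_integral_mono)
    fix y
    have "(\<integral>\<^sup>+ z. ennreal (\<bar>g (z - y)\<bar> powr p) * chi z \<partial>lborel) \<le> ?T + indicator (- cball 0 (real R)) y * ?S"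
      unfolding chi_def by (rule nn_integral_translate_tail_le[OF assms(1) RN])
    from mult_left_mono[OF this, of "ennreal \<bar>psi y\<bar>"]
    show "ennreal \<bar>psi y\<bar> * (\<integral>\<^sup>+ z. ennreal (\<bar>g (z - y)\<bar> powr p) * chi z \<partial>lborel)
        \<le> ennreal \<bar>psi y\<bar> * ?T + (ennreal \<bar>psi y\<bar> * indicator (- cball 0 (real R)) y) * ?S"
      by (simp add: distrib_left mult.assoc)
  qed simp
  also have "\<dots> = ?C * (?P * ?T + ?E * ?S)"
    by (subst nn_integral_add) (auto simp: nn_integral_multc L1)
  finally show "(\<integral>\<^sup>+ z \<in> ball x 1. ennreal (\<bar>conv g psi z\<bar> powr p * indicator (- ball 0 (real N)) z) \<partial>lebesgue)
      \<le> ?C * (?P * ?T + ?E * ?S)" .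
qed

lemma nn_integral_tail_tendsto_0:
  fixes h :: "'a::euclidean_space \<Rightarrow> ennreal"
  assumes [measurable]: "h \<in> borel_measurable borel" and fin: "(\<integral>\<^sup>+ y. h y \<partial>lborel) < \<infinity>"
  shows "(\<lambda>R::nat. \<integral>\<^sup>+ y. h y * indicator (- cball 0 (real R)) y \<partial>lborel) \<longlonglongrightarrow> 0"
proof -
  define t where "t R y = h y * indicator (- cball 0 (real R)) y" for R :: nat and y :: 'a
  have dec: "decseq t"
    by (rule decseq_SucI) (auto simp: le_fun_def t_def indicator_def)
  have "(\<lambda>R. integral\<^sup>N lborel (t R)) \<longlonglongrightarrow> (INF R. integral\<^sup>N lborel (t R))"
    by (intro LIMSEQ_INF decseq_SucI nn_integral_mono) (use decseq_SucD[OF dec] in \<open>auto simp: le_fun_def\<close>)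
  also have "(INF R. integral\<^sup>N lborel (t R)) = (\<integral>\<^sup>+ y. (INF R. t R y) \<partial>lborel)"
  proof (rule nn_integral_monotone_convergence_INF_decseq[symmetric, OF dec])
    fix R
    show "t R \<in> borel_measurable lborel" unfolding t_def by measurable
    have "integral\<^sup>N lborel (t R) \<le> (\<integral>\<^sup>+ y. h y \<partial>lborel)"
      unfolding t_def by (intro nn_integral_mono) (auto simp: indicator_def)
    then show "integral\<^sup>N lborel (t R) < \<infinity>" using fin by (rule le_less_trans)
  qed
  also have "(\<integral>\<^sup>+ y. (INF R. t R y) \<partial>lborel) = 0"
  proof -
    have "(INF R. t R y) = 0" for y
    proof -
      obtain R :: nat where "norm y \<le> real R" using real_arch_simple by blast
      then have "t R y = 0" by (simp add: t_def indicator_def)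
      then show ?thesis by (metis INF_lower UNIV_I le_zero_eq)
    qed
    then show ?thesis by simp
  qed
  finally show ?thesis unfolding t_def .
qed

lemma ennreal_obtain_half:
  fixes e :: ennreal
  assumes "0 < e"
  obtains d :: real where "0 < d" "ennreal d + ennreal d \<le> e"
proof (cases e)
  case (real r)
  with assms show ?thesis
    by (intro that[of "r / 2"]) (auto simp: ennreal_plus[symmetric] simp del: ennreal_plus)
qed (intro that[of 1], auto)

text \<open>An \<open>\<epsilon>/2\<close>-argument: first choose \<open>R\<close> to make the second summand small, then \<open>N\<close>.\<close>
lemma LIMSEQ_0_split_bound:
  fixes Q T E :: "nat \<Rightarrow> ennreal" and C P S :: ennreal
  assumes bound: "\<And>N R. R \<le> N \<Longrightarrow> Q N \<le> C * (P * T (N - R) + E R * S)"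
    and T: "T \<longlonglongrightarrow> 0" and E: "E \<longlonglongrightarrow> 0" and fin: "C < \<infinity>" "P < \<infinity>" "S < \<infinity>"
  shows "Q \<longlonglongrightarrow> 0"
proof (rule order_tendstoI)
  fix e :: ennreal
  assume "0 < e"
  then obtain d where d: "0 < d" "ennreal d + ennreal d \<le> e" by (rule ennreal_obtain_half)
  have "(\<lambda>R. C * (E R * S)) \<longlonglongrightarrow> C * (0 * S)"
    using fin by (intro ennreal_tendsto_cmult tendsto_mult_ennreal E tendsto_const) auto
  then have "\<forall>\<^sub>F R in sequentially. C * (E R * S) < ennreal d"
    using d by (intro order_tendstoD) auto
  then obtain R where R: "C * (E R * S) < ennreal d" by (auto simp: eventually_sequentially)
  have "(\<lambda>N. C * (P * T (N - R))) \<longlonglongrightarrow> C * (P * 0)"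
    using fin by (intro ennreal_tendsto_cmult filterlim_compose[OF T filterlim_minus_const_nat_at_top]) auto
  then have "\<forall>\<^sub>F N in sequentially. C * (P * T (N - R)) < ennreal d"
    using d by (intro order_tendstoD) auto
  with eventually_ge_at_top[of R] show "\<forall>\<^sub>F N in sequentially. Q N < e"
  proof eventually_elim
    case (elim N)
    have "Q N \<le> C * (P * T (N - R)) + C * (E R * S)"
      using bound[OF elim(1)] by (simp add: distrib_left)
    also have "\<dots> < ennreal (d + d)"
      using elim(2) R by (rule add_mono_ennreal)
    also have "\<dots> \<le> e" using d by (subst ennreal_plus) auto
    finally show ?case .
  qed
qed simp

lemma conv_in_Vstar_morrey:
  fixes g psi :: "'a::euclidean_space \<Rightarrow> real"
  assumes [measurable]: "g \<in> borel_measurable borel" "psi \<in> borel_measurable borel"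
    and psi: "integrable lborel psi" and p: "1 \<le> p" and g: "g \<in> Vstar_morrey p lam"
  shows "conv g psi \<in> Vstar_morrey p lam"
proof -
  have gM: "g \<in> morrey_space p lam" and T: "morrey_tail p g \<longlonglongrightarrow> 0"
    using g by (simp_all add: Vstar_morrey_def)
  have "(SUP x. \<integral>\<^sup>+ w \<in> ball x 1. ennreal (\<bar>g w\<bar> powr p) \<partial>lborel) = morrey_sup p lam g 1"
    by (simp add: morrey_M_def nn_integral_completion)
  also have "\<dots> \<le> morrey_norm_pow p lam g" by (rule morrey_sup_le_morrey_norm_pow) simp
  also have "\<dots> < \<infinity>" using gM by (simp add: morrey_space_iff)
  finally have S: "(SUP x. \<integral>\<^sup>+ w \<in> ball x 1. ennreal (\<bar>g w\<bar> powr p) \<partial>lborel) < \<infinity>" .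
  have "(\<lambda>R::nat. \<integral>\<^sup>+ y. ennreal \<bar>psi y\<bar> * indicator (- cball 0 (real R)) y \<partial>lborel) \<longlonglongrightarrow> 0"
    by (rule nn_integral_tail_tendsto_0[OF _ psi[unfolded integrable_iff_bounded, THEN conjunct2, unfolded real_norm_def]]) measurable
  from LIMSEQ_0_split_bound[OF morrey_tail_conv_le[OF assms(1-4)] T this] S
  have "morrey_tail p (conv g psi) \<longlonglongrightarrow> 0" by simp
  then show ?thesis
    using conv_in_morrey_space[OF assms(1-4) gM] by (simp add: Vstar_morrey_def)
qed

theorem theorem3p8:
  fixes p lam :: real and phi f :: "'a::euclidean_space \<Rightarrow> real"
  assumes "0 \<le> lam" and "lam \<le> real DIM('a)" and "1 \<le> p"
    and "integrable lebesgue phi"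
  shows "(f \<in> V0_morrey p lam \<longrightarrow> conv f phi \<in> V0_morrey p lam)
       \<and> (f \<in> Vinf_morrey p lam \<longrightarrow> conv f phi \<in> Vinf_morrey p lam)
       \<and> (f \<in> Vstar_morrey p lam \<longrightarrow> conv f phi \<in> Vstar_morrey p lam)"
proof (cases "f \<in> borel_measurable lebesgue")
  case False
  then show ?thesis
    by (simp add: V0_morrey_def Vinf_morrey_def Vstar_morrey_def morrey_space_iff)
next
  case True
  then obtain g psi where g: "g \<in> borel_measurable borel" "AE x in lborel. f x = g x"
    and psi: "psi \<in> borel_measurable borel" "integrable lborel psi"
    and conv_eq: "conv f phi = conv g psi"
    using conv_Borel_representatives[OF _ assms(4)] by metis
  have g_lebesgue: "g \<in> borel_measurable lebesgue"
    using g(1) by (simp add: measurable_completion)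
  show ?thesis
    unfolding conv_eq morrey_spaces_cong_AE[OF True g_lebesgue g(2)]
    using conv_in_V0_morrey[OF g(1) psi assms(3)] conv_in_Vinf_morrey[OF g(1) psi assms(3)]
      conv_in_Vstar_morrey[OF g(1) psi assms(3)] by blast
qed

end
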